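(* Let $\lambda>0$, $\gamma>0$, $\Delta>0$, and let $\{\Omega_1,\dots,\Omega_N\}$ be a finite $\Delta$-partition of $\Omega$. Let $$B_p^\gamma(r)=\{x\in B_p(r):\|x(\xi)\|\le\gamma\ \forall\xi\in\Omega\}$$ and $$B_p^{\gamma,\Delta}(r)=\{x\in B_p^\gamma(r):\ x\text{ is constant on each }\Omega_i,\ i=1,\dots,N\}.$$ Let $\mathcal{F}_p^{\lambda,\gamma}(r)=\{F_\lambda(x):x\in B_p^\gamma(r)\}$ and $\mathcal{F}_p^{\lambda,\gamma,\Delta}(r)=\{F_\lambda(x):x\in B_p^{\gamma,\Delta}(r)\}$. Then $$h_q\big(\mathcal{F}_p^{\lambda,\gamma}(r),\mathcal{F}_p^{\lambda,\gamma,\Delta}(r)\big)\le 2r[\mu(\Omega)]^{2/q}\omega_\lambda(\Delta).$$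
   Context: Let $k,m,n\ge 1$ be integers and let $\Omega\subset\mathbb{R}^k$ be a compact set. Let $\mu$ denote Lebesgue measure. Let $p>1$, let $q$ satisfy $1/p+1/q=1$, and let $r>0$. $\|\cdot\|$ denotes the Euclidean norm on vectors and the Euclidean (Frobenius) norm on $m\times n$ matrices. $L_p(\Omega;\mathbb{R}^n)$ is the space of Lebesgue measurable $x:\Omega\to\mathbb{R}^n$ with $\|x\|_p=(\int_\Omega\|x(s)\|^p\,ds)^{1/p}<\infty$, and $B_p(r)=\{x\in L_p(\Omega;\mathbb{R}^n):\|x\|_p\le r\}$. $K_\lambda:\Omega\times\Omega\to\mathbb{R}^{m\times n}$ is a continuous function. Set $F_\lambda(x)(\xi)=\int_\Omega K_\lambda(\xi,s)x(s)\,ds$. Set $\omega_\lambda(\Delta)=\max\{\|K_\lambda(\xi,s_2)-K_\lambda(\xi,s_1)\|:\xi,s_1,s_2\in\Omega,\ \|s_2-s_1\|\le\Delta\}$. A finite $\Delta$-partition of $\Omega$ is a finite family of pairwise disjoint Lebesgue measurable subsets of $\Omega$ with union $\Omega$, each of diameter at most $\Delta$. $h_q$ denotes the Hausdorff distance in $L_q(\Omega;\mathbb{R}^m)$. *)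

theory Defs
  imports "HOL-Analysis.Analysis"
begin

definition Lp_pow_integral :: "real \<Rightarrow> 'a::euclidean_space set \<Rightarrow> ('a \<Rightarrow> 'b::real_normed_vector) \<Rightarrow> ennreal" where
  "Lp_pow_integral p \<Omega> x = (\<integral>\<^sup>+ s. ennreal (indicator \<Omega> s * norm (x s) powr p) \<partial>lebesgue)"

definition in_Lp :: "real \<Rightarrow> 'a::euclidean_space set \<Rightarrow> ('a \<Rightarrow> 'b::euclidean_space) \<Rightarrow> bool" where
  "in_Lp p \<Omega> x \<longleftrightarrow> set_borel_measurable lebesgue \<Omega> x \<and> Lp_pow_integral p \<Omega> x < \<infinity>"

definition Lp_norm :: "real \<Rightarrow> 'a::euclidean_space set \<Rightarrow> ('a \<Rightarrow> 'b::real_normed_vector) \<Rightarrow> real" where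
  "Lp_norm p \<Omega> x = enn2real (Lp_pow_integral p \<Omega> x) powr (1 / p)"

definition Lp_ball :: "real \<Rightarrow> 'a::euclidean_space set \<Rightarrow> real \<Rightarrow> ('a \<Rightarrow> 'b::euclidean_space) set" where
  "Lp_ball p \<Omega> r = {x. in_Lp p \<Omega> x \<and> Lp_norm p \<Omega> x \<le> r}"

definition Lp_ball_bdd :: "real \<Rightarrow> 'a::euclidean_space set \<Rightarrow> real \<Rightarrow> real \<Rightarrow> ('a \<Rightarrow> 'b::euclidean_space) set" where
  "Lp_ball_bdd p \<Omega> r \<gamma> = {x \<in> Lp_ball p \<Omega> r. \<forall>\<xi>\<in>\<Omega>. norm (x \<xi>) \<le> \<gamma>}"

definition Lp_ball_bdd_pc :: "real \<Rightarrow> 'a::euclidean_space set \<Rightarrow> real \<Rightarrow> real \<Rightarrow> 'a set set \<Rightarrow> ('a \<Rightarrow> 'b::euclidean_space) set" where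
  "Lp_ball_bdd_pc p \<Omega> r \<gamma> P = {x \<in> Lp_ball_bdd p \<Omega> r \<gamma>. \<forall>A\<in>P. \<exists>c. \<forall>s\<in>A. x s = c}"

definition is_Delta_partition :: "'a::euclidean_space set \<Rightarrow> real \<Rightarrow> 'a set set \<Rightarrow> bool" where
  "is_Delta_partition \<Omega> \<Delta> P \<longleftrightarrow> finite P \<and> disjoint P \<and> \<Union>P = \<Omega> \<and>
     (\<forall>A\<in>P. A \<in> sets lebesgue \<and> diameter A \<le> \<Delta>)"

definition F_op :: "(real^'k \<Rightarrow> real^'k \<Rightarrow> real^'n^'m) \<Rightarrow> (real^'k) set \<Rightarrow> (real^'k \<Rightarrow> real^'n) \<Rightarrow> (real^'k \<Rightarrow> real^'m)" where
  "F_op K \<Omega> x = (\<lambda>\<xi>. LINT s:\<Omega>|lebesgue. K \<xi> s *v x s)"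

text \<open>Modulus of continuity omega(Delta) (Frobenius norm = norm on real^'n^'m).\<close>
definition mod_cont :: "(real^'k \<Rightarrow> real^'k \<Rightarrow> real^'n^'m) \<Rightarrow> (real^'k) set \<Rightarrow> real \<Rightarrow> real" where
  "mod_cont K \<Omega> \<Delta> = Sup {norm (K \<xi> s2 - K \<xi> s1) | \<xi> s1 s2. \<xi> \<in> \<Omega> \<and> s1 \<in> \<Omega> \<and> s2 \<in> \<Omega> \<and> norm (s2 - s1) \<le> \<Delta>}"

definition hausdist_Lq :: "real \<Rightarrow> 'a::euclidean_space set \<Rightarrow> ('a \<Rightarrow> 'b::real_normed_vector) set \<Rightarrow> ('a \<Rightarrow> 'b) set \<Rightarrow> ereal" where
  "hausdist_Lq q \<Omega> A B = max
     (SUP f\<in>A. INF g\<in>B. ereal (Lp_norm q \<Omega> (\<lambda>s. f s - g s)))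
     (SUP g\<in>B. INF f\<in>A. ereal (Lp_norm q \<Omega> (\<lambda>s. f s - g s)))"

end

theory Submission
  imports Defs
begin

text \<open>Replace \<open>x\<close> by its average on every cell of the partition. Averaging keeps the pointwise
  bound and, by H\<ouml>lder's inequality on each cell, does not increase the \<open>L\<^sub>p\<close> norm, so the
  averaged function \<open>y\<close> lies in the smaller ball. As \<open>x - y\<close> has mean zero on every cell \<open>A\<close>, the kernel
  \<open>K(\<xi>, s)\<close> may be replaced there by \<open>K(\<xi>, s) - K(\<xi>, s\<^sub>A)\<close> for a fixed \<open>s\<^sub>A \<in> A\<close>, which is at most
  \<open>\<omega>(\<Delta>)\<close>; this gives \<open>\<parallel>F x(\<xi>) - F y(\<xi>)\<parallel> \<le> 2 \<omega>(\<Delta>) \<integral>\<parallel>x\<parallel> \<le> 2 \<omega>(\<Delta>) \<mu>(\<Omega>)\<^bsup>1/q\<^esup> r\<close>, and taking the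
  \<open>L\<^sub>q\<close> norm of this bounded function costs another factor \<open>\<mu>(\<Omega>)\<^bsup>1/q\<^esup>\<close>. The other half of the
  Hausdorff distance vanishes since the second set is contained in the first.\<close>

lemma Youngs_inequality_scaled:
  fixes a N L p q :: real
  assumes pq: "p > 1" "1/p + 1/q = 1" and "a \<ge> 0" "N > 0" "L > 0"
  shows "a \<le> N * L / (p * N powr p) * a powr p + N * L / (q * L powr q)"
proof -
  have q: "q > 1" using pq
    by (smt (verit) divide_less_eq_1_pos divide_pos_pos zero_less_divide_1_iff)
  have "(a / N) * (1 / L) \<le> (a / N) powr p / p + (1 / L) powr q / q"
    by (rule Youngs_inequality) (use assms q in auto)
  then have "N * L * ((a / N) * (1 / L)) \<le> N * L * ((a / N) powr p / p + (1 / L) powr q / q)"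
    using assms by (intro mult_left_mono) auto
  then show ?thesis
    using assms by (simp add: powr_divide field_simps)
qed

lemma nn_integral_indicator_eq_0:
  fixes f :: "'a \<Rightarrow> real"
  assumes "(\<lambda>s. indicator A s * f s powr p) \<in> borel_measurable M" "\<And>s. f s \<ge> 0"
    and "A \<in> null_sets M \<or> (\<integral>\<^sup>+ s. ennreal (indicator A s * f s powr p) \<partial>M) = 0"
  shows "(\<integral>\<^sup>+ s. ennreal (indicator A s * f s) \<partial>M) = 0"
proof -
  have "AE s in M. indicator A s * f s = 0"
    using assms(3)
  proof
    assume "A \<in> null_sets M"
    from AE_not_in[OF this] show ?thesis by eventually_elim simp
  next
    assume "(\<integral>\<^sup>+ s. ennreal (indicator A s * f s powr p) \<partial>M) = 0"
    then have "AE s in M. ennreal (indicator A s * f s powr p) = 0"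
      using nn_integral_0_iff_AE[of "\<lambda>s. ennreal (indicator A s * f s powr p)" M] assms(1) by simp
    then show ?thesis
    proof eventually_elim
      case (elim s)
      then show ?case using assms(2)[of s] by (cases "s \<in> A") (auto simp: indicator_def)
    qed
  qed
  then show ?thesis
    by (subst nn_integral_cong_AE[where v = "\<lambda>_. 0"]) (auto elim: eventually_mono)
qed

lemma nn_integral_indicator_Young_bound:
  fixes f :: "'a \<Rightarrow> real"
  assumes A: "A \<in> sets M" and fp_meas: "(\<lambda>s. indicator A s * f s powr p) \<in> borel_measurable M"
    and f_nonneg: "\<And>s. f s \<ge> 0" and pq: "p > 1" "1/p + 1/q = 1" and NL: "N > 0" "L > 0"
  shows "(\<integral>\<^sup>+ s. ennreal (indicator A s * f s) \<partial>M)
      \<le> ennreal (N * L / (p * N powr p)) * (\<integral>\<^sup>+ s. ennreal (indicator A s * f s powr p) \<partial>M)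
        + ennreal (N * L / (q * L powr q)) * emeasure M A"
proof -
  define \<alpha> where "\<alpha> = N * L / (p * N powr p)"
  define \<beta> where "\<beta> = N * L / (q * L powr q)"
  have q: "q > 1" using pq
    by (smt (verit) divide_less_eq_1_pos divide_pos_pos zero_less_divide_1_iff)
  have \<alpha>\<beta>: "\<alpha> \<ge> 0" "\<beta> \<ge> 0" using NL pq q by (auto simp: \<alpha>_def \<beta>_def)
  have "ennreal (indicator A s * f s) \<le> ennreal \<alpha> * ennreal (indicator A s * f s powr p) + ennreal \<beta> * indicator A s"
    for s
  proof -
    have "indicator A s * f s \<le> \<alpha> * (indicator A s * f s powr p) + \<beta> * indicator A s"
      using Youngs_inequality_scaled[OF pq f_nonneg NL] by (simp add: \<alpha>_def \<beta>_def indicator_def)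
    then have "ennreal (indicator A s * f s)
        \<le> ennreal (\<alpha> * (indicator A s * f s powr p) + \<beta> * indicator A s)"
      by (rule ennreal_leI)
    also have "\<dots> = ennreal \<alpha> * ennreal (indicator A s * f s powr p) + ennreal \<beta> * indicator A s"
      using \<alpha>\<beta> by (simp add: ennreal_plus[symmetric] ennreal_mult indicator_def)
    finally show ?thesis .
  qed
  then have "(\<integral>\<^sup>+ s. ennreal (indicator A s * f s) \<partial>M)
      \<le> (\<integral>\<^sup>+ s. ennreal \<alpha> * ennreal (indicator A s * f s powr p) + ennreal \<beta> * indicator A s \<partial>M)"
    by (rule nn_integral_mono)
  also have "\<dots> = ennreal \<alpha> * (\<integral>\<^sup>+ s. ennreal (indicator A s * f s powr p) \<partial>M) + ennreal \<beta> * emeasure M A"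
    using fp_meas A by (subst nn_integral_add) (auto simp: nn_integral_cmult nn_integral_cmult_indicator)
  finally show ?thesis unfolding \<alpha>_def \<beta>_def .
qed

lemma nn_integral_indicator_Holder:
  fixes f :: "'a \<Rightarrow> real"
  assumes A: "A \<in> sets M" "emeasure M A < \<infinity>"
    and f_meas: "(\<lambda>s. indicator A s * f s) \<in> borel_measurable M"
    and f_nonneg: "\<And>s. f s \<ge> 0"
    and pq: "p > 1" "1/p + 1/q = 1"
    and fin: "(\<integral>\<^sup>+ s. ennreal (indicator A s * f s powr p) \<partial>M) < \<infinity>"
  shows "(\<integral>\<^sup>+ s. ennreal (indicator A s * f s) \<partial>M)
      \<le> ennreal (measure M A powr (1/q) * enn2real (\<integral>\<^sup>+ s. ennreal (indicator A s * f s powr p) \<partial>M) powr (1/p))"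
proof -
  define m where "m = measure M A"
  define II where "II = (\<integral>\<^sup>+ s. ennreal (indicator A s * f s powr p) \<partial>M)"
  define I where "I = enn2real II"
  have q: "q > 1" using pq
    by (smt (verit) divide_less_eq_1_pos divide_pos_pos zero_less_divide_1_iff)
  have "(\<lambda>s. (indicator A s * f s) powr p) \<in> borel_measurable M"
    using f_meas by measurable
  moreover have "indicator A s * f s powr p = (indicator A s * f s) powr p" for s
    using pq by (auto simp: indicator_def)
  ultimately have fp_meas: "(\<lambda>s. indicator A s * f s powr p) \<in> borel_measurable M"
    by simp
  have II: "II = ennreal I" and I_nonneg: "I \<ge> 0"
    using fin by (simp_all add: I_def II_def less_top)
  have emA: "emeasure M A = ennreal m" and m_nonneg: "m \<ge> 0"
    using A by (simp_all add: m_def emeasure_eq_ennreal_measure less_top)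
  show ?thesis
  proof (cases "m = 0 \<or> I = 0")
    case True
    then have "A \<in> null_sets M \<or> II = 0" using A emA II by (auto simp: null_sets_def)
    with nn_integral_indicator_eq_0[OF fp_meas f_nonneg] show ?thesis by (simp add: II_def)
  next
    case False
    then have m_pos: "m > 0" and I_pos: "I > 0" using m_nonneg I_nonneg by auto
    define N where "N = I powr (1/p)"
    define L where "L = m powr (1/q)"
    have N_pos: "N > 0" and L_pos: "L > 0" using m_pos I_pos by (auto simp: N_def L_def)
    have N_powr: "N powr p = I" using I_pos pq by (simp add: N_def powr_powr)
    have L_powr: "L powr q = m" using m_pos q by (simp add: L_def powr_powr)
    have "(\<integral>\<^sup>+ s. ennreal (indicator A s * f s) \<partial>M)
        \<le> ennreal (N * L / (p * I)) * ennreal I + ennreal (N * L / (q * m)) * ennreal m"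
      using nn_integral_indicator_Young_bound[OF A(1) fp_meas f_nonneg pq N_pos L_pos]
      by (simp add: N_powr L_powr II[unfolded II_def] emA)
    also have "\<dots> = ennreal (N * L / (p * I) * I + N * L / (q * m) * m)"
      using N_pos L_pos I_pos m_pos pq q by (simp add: ennreal_mult''[symmetric])
    also have "N * L / (p * I) * I + N * L / (q * m) * m = N * L * (1/p + 1/q)"
      using I_pos m_pos by (simp add: field_simps)
    finally show ?thesis using pq(2) by (simp add: N_def L_def I_def II_def m_def mult.commute)
  qed
qed

lemma integral_indicator_Holder:
  fixes f :: "'a \<Rightarrow> real"
  assumes "A \<in> sets M" "emeasure M A < \<infinity>"
    and "(\<lambda>s. indicator A s * f s) \<in> borel_measurable M"
    and "\<And>s. f s \<ge> 0"
    and "p > 1" "1/p + 1/q = 1"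
    and "(\<integral>\<^sup>+ s. ennreal (indicator A s * f s powr p) \<partial>M) < \<infinity>"
  shows "(\<integral> s. indicator A s * f s \<partial>M)
      \<le> measure M A powr (1/q) * enn2real (\<integral>\<^sup>+ s. ennreal (indicator A s * f s powr p) \<partial>M) powr (1/p)"
proof -
  have "(\<integral> s. indicator A s * f s \<partial>M) = enn2real (\<integral>\<^sup>+ s. ennreal (indicator A s * f s) \<partial>M)"
    by (rule integral_eq_nn_integral) (use assms(3,4) in auto)
  also have "\<dots> \<le> measure M A powr (1/q) * enn2real (\<integral>\<^sup>+ s. ennreal (indicator A s * f s powr p) \<partial>M) powr (1/p)"
    using nn_integral_indicator_Holder[OF assms] by (intro enn2real_leI) auto
  finally show ?thesis .
qed

lemma norm_matrix_vector_mult_le: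
  fixes A :: "real^'n^'m"
  shows "norm (A *v x) \<le> norm A * norm x"
proof -
  have row: "(A *v x) $ i = inner (A $ i) x" for i
    by (simp add: matrix_vector_mult_def inner_vec_def mult.commute)
  have "(norm (A *v x))\<^sup>2 = (\<Sum>i\<in>UNIV. (inner (A $ i) x)\<^sup>2)"
    by (simp add: norm_vec_def L2_set_def row sum_nonneg)
  also have "\<dots> \<le> (\<Sum>i\<in>UNIV. (norm (A $ i))\<^sup>2 * (norm x)\<^sup>2)"
    by (intro sum_mono)
      (metis Cauchy_Schwarz_ineq2 power_mono abs_ge_zero power2_abs power_mult_distrib)
  also have "\<dots> = (norm A * norm x)\<^sup>2"
    by (simp add: norm_vec_def L2_set_def power_mult_distrib sum_distrib_right sum_nonneg)
  finally show ?thesis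
    by (meson mult_nonneg_nonneg norm_ge_zero power2_le_imp_le)
qed

lemma bounded_bilinear_matrix_vector_mult: "bounded_bilinear (\<lambda>(A::real^'n^'m) x. A *v x)"
proof (rule bounded_bilinear.intro)
  show "\<exists>K. \<forall>(A::real^'n^'m) x. norm (A *v x) \<le> norm A * norm x * K"
    by (rule exI[of _ 1]) (simp add: norm_matrix_vector_mult_le)
qed (auto simp: matrix_vector_mult_add_rdistrib matrix_vector_right_distrib
      scaleR_matrix_vector_assoc matrix_vector_mult_scaleR)

lemma borel_measurable_indicator_matrix_vector_mult:
  fixes k :: "'a \<Rightarrow> real^'n^'m" and h :: "'a \<Rightarrow> real^'n"
  assumes "(\<lambda>s. indicator A s *\<^sub>R k s) \<in> borel_measurable M"
    and "(\<lambda>s. indicator A s *\<^sub>R h s) \<in> borel_measurable M"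
  shows "(\<lambda>s. indicator A s *\<^sub>R (k s *v h s)) \<in> borel_measurable M"
proof -
  have "continuous_on UNIV (\<lambda>z::(real^'n^'m) \<times> (real^'n). fst z *v snd z)"
    by (rule bounded_bilinear.continuous_on[OF bounded_bilinear_matrix_vector_mult
          continuous_on_fst[OF continuous_on_id] continuous_on_snd[OF continuous_on_id]])
  moreover have "(\<lambda>s. indicator A s *\<^sub>R (k s *v h s))
      = (\<lambda>s. (indicator A s *\<^sub>R k s) *v (indicator A s *\<^sub>R h s))"
    by (auto simp: indicator_def)
  ultimately show ?thesis
    using borel_measurable_continuous_Pair[OF assms] by simp
qed

lemma borel_measurable_indicator_subset:
  fixes h :: "'a \<Rightarrow> 'b::{real_normed_vector, second_countable_topology}"
  assumes "A \<in> sets M" "A \<subseteq> \<Omega>" "(\<lambda>s. indicator \<Omega> s *\<^sub>R h s) \<in> borel_measurable M"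
  shows "(\<lambda>s. indicator A s *\<^sub>R h s) \<in> borel_measurable M"
proof -
  have "(\<lambda>s. indicator A s *\<^sub>R (indicator \<Omega> s *\<^sub>R h s)) \<in> borel_measurable M"
    by (rule borel_measurable_scaleR[OF borel_measurable_indicator[OF assms(1)] assms(3)])
  moreover have "(\<lambda>s. indicator A s *\<^sub>R (indicator \<Omega> s *\<^sub>R h s)) = (\<lambda>s. indicator A s *\<^sub>R h s)"
    using assms(2) by (intro ext) (auto simp: indicator_def)
  ultimately show ?thesis by simp
qed

lemma integrable_indicator_bounded:
  fixes h :: "'a \<Rightarrow> 'b::{banach, second_countable_topology}"
  assumes "A \<in> sets M" "emeasure M A < \<infinity>" "(\<lambda>s. indicator A s *\<^sub>R h s) \<in> borel_measurable M"
    and "\<And>s. s \<in> A \<Longrightarrow> norm (h s) \<le> B"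
  shows "integrable M (\<lambda>s. indicator A s *\<^sub>R h s)"
proof -
  have "integrable M (\<lambda>s. indicator A s *\<^sub>R (indicator A s *\<^sub>R h s))"
    using assms(4) by (intro integrableI_bounded_set_indicator[OF assms(1,3,2)]) auto
  moreover have "(\<lambda>s. indicator A s *\<^sub>R (indicator A s *\<^sub>R h s)) = (\<lambda>s. indicator A s *\<^sub>R h s)"
    by (auto simp: indicator_def)
  ultimately show ?thesis by simp
qed

lemma integrable_indicator_matrix_vector_mult:
  fixes k :: "'a \<Rightarrow> real^'n^'m" and h :: "'a \<Rightarrow> real^'n"
  assumes "A \<in> sets M" "emeasure M A < \<infinity>"
    and "(\<lambda>s. indicator A s *\<^sub>R k s) \<in> borel_measurable M" "\<And>s. s \<in> A \<Longrightarrow> norm (k s) \<le> B"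
    and "(\<lambda>s. indicator A s *\<^sub>R h s) \<in> borel_measurable M" "\<And>s. s \<in> A \<Longrightarrow> norm (h s) \<le> C"
  shows "integrable M (\<lambda>s. indicator A s *\<^sub>R (k s *v h s))"
proof (rule integrable_indicator_bounded[OF assms(1,2)
      borel_measurable_indicator_matrix_vector_mult[OF assms(3,5)]])
  fix s assume "s \<in> A"
  have "norm (k s *v h s) \<le> norm (k s) * norm (h s)" by (rule norm_matrix_vector_mult_le)
  also have "\<dots> \<le> B * C"
    using assms(4,6)[OF \<open>s \<in> A\<close>] by (intro mult_mono) (auto intro: order_trans[OF norm_ge_zero])
  finally show "norm (k s *v h s) \<le> B * C" .
qed

lemma Lp_norm_le_const:
  assumes "\<Omega> \<in> sets lebesgue" "emeasure lebesgue \<Omega> < \<infinity>" "q > 0" "C \<ge> 0"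
    and "\<And>\<xi>. \<xi> \<in> \<Omega> \<Longrightarrow> norm (g \<xi>) \<le> C"
  shows "Lp_norm q \<Omega> g \<le> C * measure lebesgue \<Omega> powr (1/q)"
proof -
  have "Lp_pow_integral q \<Omega> g \<le> (\<integral>\<^sup>+ s. ennreal (C powr q) * indicator \<Omega> s \<partial>lebesgue)"
    unfolding Lp_pow_integral_def
    using assms(3-5) by (intro nn_integral_mono) (auto simp: indicator_def intro!: ennreal_leI powr_mono2)
  also have "\<dots> = ennreal (C powr q * measure lebesgue \<Omega>)"
    using assms by (simp add: nn_integral_cmult_indicator emeasure_eq_ennreal_measure less_top ennreal_mult)
  finally have "enn2real (Lp_pow_integral q \<Omega> g) \<le> C powr q * measure lebesgue \<Omega>"
    by (rule enn2real_leI[rotated]) simp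
  then have "Lp_norm q \<Omega> g \<le> (C powr q * measure lebesgue \<Omega>) powr (1/q)"
    unfolding Lp_norm_def using assms by (intro powr_mono2) auto
  also have "\<dots> = C * measure lebesgue \<Omega> powr (1/q)"
    using assms by (simp add: powr_mult powr_powr)
  finally show ?thesis .
qed

definition cell_average :: "'a::euclidean_space set \<Rightarrow> ('a \<Rightarrow> 'b::euclidean_space) \<Rightarrow> 'b" where
  "cell_average A x =
    (if measure lebesgue A = 0 then 0 else (1 / measure lebesgue A) *\<^sub>R (\<integral> s. indicator A s *\<^sub>R x s \<partial>lebesgue))"

lemma measure_mult_norm_cell_average_le:
  "measure lebesgue A * norm (cell_average A x) \<le> (\<integral> s. indicator A s * norm (x s) \<partial>lebesgue)"
proof (cases "measure lebesgue A = 0")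
  case True
  then show ?thesis by (simp add: integral_nonneg_AE)
next
  case False
  then have "measure lebesgue A * norm (cell_average A x) = norm (\<integral> s. indicator A s *\<^sub>R x s \<partial>lebesgue)"
    by (simp add: cell_average_def)
  also have "\<dots> \<le> (\<integral> s. norm (indicator A s *\<^sub>R x s) \<partial>lebesgue)"
    by (rule integral_norm_bound)
  finally show ?thesis by simp
qed

lemma norm_cell_average_le:
  assumes A: "A \<in> sets lebesgue" "emeasure lebesgue A < \<infinity>"
    and x: "\<gamma> \<ge> 0" "\<And>s. s \<in> A \<Longrightarrow> norm (x s) \<le> \<gamma>"
  shows "norm (cell_average A x) \<le> \<gamma>"
proof (cases "measure lebesgue A = 0")
  case True
  then show ?thesis using x by (simp add: cell_average_def)
next
  case False
  then have m_pos: "measure lebesgue A > 0" using measure_nonneg[of lebesgue A] by linarith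
  have "(\<integral> s. indicator A s * norm (x s) \<partial>lebesgue) \<le> (\<integral> s. indicator A s * \<gamma> \<partial>lebesgue)"
  proof (cases "integrable lebesgue (\<lambda>s. indicator A s * norm (x s))")
    case True
    moreover have "integrable lebesgue (\<lambda>s. indicator A s * \<gamma>)" using A by simp
    ultimately show ?thesis
      using x by (intro integral_mono) (auto simp: indicator_def)
  next
    case False
    then show ?thesis using A x by (simp add: not_integrable_integral_eq)
  qed
  also have "\<dots> = \<gamma> * measure lebesgue A" by simp
  finally have "measure lebesgue A * norm (cell_average A x) \<le> measure lebesgue A * \<gamma>"
    using measure_mult_norm_cell_average_le[of A x] by (simp add: mult.commute)
  then show ?thesis using m_pos by simp
qed

lemma cell_average_powr_le:
  assumes A: "A \<in> sets lebesgue" "emeasure lebesgue A < \<infinity>" and p: "p > 1"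
    and x_meas: "(\<lambda>s. indicator A s *\<^sub>R x s) \<in> borel_measurable lebesgue"
  shows "ennreal (norm (cell_average A x) powr p) * emeasure lebesgue A
      \<le> (\<integral>\<^sup>+ s. ennreal (indicator A s * norm (x s) powr p) \<partial>lebesgue)"
    (is "_ \<le> ?I")
proof (cases "?I = \<infinity>")
  case I_finite: False
  define m where "m = measure lebesgue A"
  define q where "q = p / (p - 1)"
  have pq: "1/p + 1/q = 1" and p_div_q: "p / q = p - 1"
    using p by (simp_all add: q_def field_simps)
  have em: "emeasure lebesgue A = ennreal m"
    using A by (simp add: m_def emeasure_eq_ennreal_measure less_top)
  show ?thesis
  proof (cases "m = 0")
    case True
    then show ?thesis by (simp add: cell_average_def m_def)
  next
    case False
    then have m_pos: "m > 0" using measure_nonneg[of lebesgue A] m_def by linarith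
    define I where "I = enn2real ?I"
    have I_nonneg: "I \<ge> 0" and I: "?I = ennreal I"
      using I_finite by (simp_all add: I_def less_top)
    have "(\<lambda>s. norm (indicator A s *\<^sub>R x s)) \<in> borel_measurable lebesgue"
      using x_meas by measurable
    then have "(\<lambda>s. indicator A s * norm (x s)) \<in> borel_measurable lebesgue"
      by simp
    from integral_indicator_Holder[OF A this _ p pq] I_finite
    have "(\<integral> s. indicator A s * norm (x s) \<partial>lebesgue) \<le> m powr (1/q) * I powr (1/p)"
      by (simp add: m_def I_def less_top)
    then have "m * norm (cell_average A x) \<le> m powr (1/q) * I powr (1/p)"
      using measure_mult_norm_cell_average_le[of A x] unfolding m_def by linarith
    then have "norm (cell_average A x) \<le> m powr (1/q) * I powr (1/p) / m"
      using m_pos by (simp add: field_simps)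
    then have "norm (cell_average A x) powr p \<le> (m powr (1/q) * I powr (1/p) / m) powr p"
      using p by (intro powr_mono2) auto
    also have "\<dots> = (m powr (1/q)) powr p * (I powr (1/p)) powr p / m powr p"
      using m_pos I_nonneg by (simp add: powr_divide powr_mult)
    also have "\<dots> = m powr (p - 1) * I / m powr p"
      using m_pos I_nonneg p p_div_q by (simp add: powr_powr)
    also have "\<dots> = I / m"
      using m_pos by (simp add: powr_diff)
    finally have "norm (cell_average A x) powr p * m \<le> I"
      using m_pos by (simp add: field_simps)
    then show ?thesis using em I m_pos by (simp add: ennreal_mult[symmetric] ennreal_leI)
  qed
qed simp

lemma integral_indicator_matrix_diff_cell_average:
  fixes x :: "'a::euclidean_space \<Rightarrow> real^'n" and M :: "real^'n^'m"
  assumes A: "A \<in> sets lebesgue" "emeasure lebesgue A < \<infinity>"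
    and int_x: "integrable lebesgue (\<lambda>s. indicator A s *\<^sub>R x s)"
  shows "(\<integral> s. indicator A s *\<^sub>R (M *v (x s - cell_average A x)) \<partial>lebesgue) = 0"
proof -
  have "integrable lebesgue (\<lambda>s. indicator A s *\<^sub>R x s - indicator A s *\<^sub>R cell_average A x)"
    using A by (intro Bochner_Integration.integrable_diff[OF int_x integrable_scaleR_left]) simp
  then have int_xc: "integrable lebesgue (\<lambda>s. indicator A s *\<^sub>R (x s - cell_average A x))"
    by (simp add: scaleR_right_diff_distrib)
  have "(\<integral> s. indicator A s *\<^sub>R (x s - cell_average A x) \<partial>lebesgue) = 0"
  proof (cases "measure lebesgue A = 0")
    case True
    then have "A \<in> null_sets lebesgue"
      using A by (simp add: null_sets_def emeasure_eq_ennreal_measure less_top)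
    then show ?thesis
      by (intro integral_eq_zero_AE) (auto elim: eventually_mono[OF AE_not_in])
  next
    case False
    have "(\<integral> s. indicator A s *\<^sub>R (x s - cell_average A x) \<partial>lebesgue)
        = (\<integral> s. indicator A s *\<^sub>R x s \<partial>lebesgue) - measure lebesgue A *\<^sub>R cell_average A x"
      using A int_x by (simp add: scaleR_right_diff_distrib)
    also have "\<dots> = 0" using False by (simp add: cell_average_def)
    finally show ?thesis .
  qed
  then show ?thesis
    using integral_bounded_linear[OF bounded_bilinear.bounded_linear_right[OF
        bounded_bilinear_matrix_vector_mult, of M] int_xc]
    by (simp add: matrix_vector_mult_scaleR)
qed

lemma norm_integral_indicator_matrix_vector_le:
  fixes G :: "'a::euclidean_space \<Rightarrow> real^'n^'m" and h :: "'a \<Rightarrow> real^'n"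
  assumes "integrable M (\<lambda>s. indicator A s *\<^sub>R (G s *v h s))" "integrable M (\<lambda>s. indicator A s * g s)"
    and "\<And>s. s \<in> A \<Longrightarrow> norm (G s) * norm (h s) \<le> g s"
  shows "norm (\<integral> s. indicator A s *\<^sub>R (G s *v h s) \<partial>M) \<le> (\<integral> s. indicator A s * g s \<partial>M)"
proof (rule Bochner_Integration.integral_norm_bound_integral[OF assms(1,2)])
  fix s
  show "norm (indicator A s *\<^sub>R (G s *v h s)) \<le> indicator A s * g s"
    using norm_matrix_vector_mult_le[of "G s" "h s"] assms(3)[of s] by (auto simp: indicator_def)
qed

lemma norm_integral_cell_oscillation_le:
  fixes k :: "'a::euclidean_space \<Rightarrow> real^'n^'m" and x :: "'a \<Rightarrow> real^'n"
  assumes A: "A \<in> sets lebesgue" "emeasure lebesgue A < \<infinity>"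
    and k: "(\<lambda>s. indicator A s *\<^sub>R k s) \<in> borel_measurable lebesgue" "\<And>s. s \<in> A \<Longrightarrow> norm (k s) \<le> B"
    and x: "(\<lambda>s. indicator A s *\<^sub>R x s) \<in> borel_measurable lebesgue" "\<And>s. s \<in> A \<Longrightarrow> norm (x s) \<le> \<gamma>"
    and osc: "\<And>s t. s \<in> A \<Longrightarrow> t \<in> A \<Longrightarrow> norm (k s - k t) \<le> \<omega>"
  shows "norm (\<integral> s. indicator A s *\<^sub>R (k s *v (x s - cell_average A x)) \<partial>lebesgue)
      \<le> 2 * \<omega> * (\<integral> s. indicator A s * norm (x s) \<partial>lebesgue)"
proof (cases "A = {}")
  case False
  then obtain t where t: "t \<in> A" by blast
  define c where "c = cell_average A x"
  have \<gamma>_nonneg: "\<gamma> \<ge> 0" and \<omega>_nonneg: "\<omega> \<ge> 0"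
    using x(2)[OF t] osc[OF t t] by (auto intro: order_trans[OF norm_ge_zero])
  have c_le: "norm c \<le> \<gamma>"
    unfolding c_def using A \<gamma>_nonneg x(2) by (rule norm_cell_average_le)
  have "(\<lambda>s. indicator A s *\<^sub>R x s - indicator A s *\<^sub>R c) \<in> borel_measurable lebesgue"
    using x(1) A by measurable
  then have xc_meas: "(\<lambda>s. indicator A s *\<^sub>R (x s - c)) \<in> borel_measurable lebesgue"
    by (simp add: scaleR_right_diff_distrib)
  have xc_le: "norm (x s - c) \<le> \<gamma> + \<gamma>" if "s \<in> A" for s
    using x(2)[OF that] c_le norm_triangle_ineq4[of "x s" c] by linarith
  have int_x: "integrable lebesgue (\<lambda>s. indicator A s *\<^sub>R x s)"
    using A x by (rule integrable_indicator_bounded)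
  have int_k: "integrable lebesgue (\<lambda>s. indicator A s *\<^sub>R (k s *v (x s - c)))"
    using A k xc_meas xc_le by (rule integrable_indicator_matrix_vector_mult)
  have int_kt: "integrable lebesgue (\<lambda>s. indicator A s *\<^sub>R (k t *v (x s - c)))"
    using A _ _ xc_meas xc_le by (rule integrable_indicator_matrix_vector_mult) (use A in auto)
  \<comment> \<open>\<open>x - c\<close> has mean zero on \<open>A\<close>, so \<open>k s\<close> may be replaced by \<open>k s - k t\<close>\<close>
  have "(\<integral> s. indicator A s *\<^sub>R (k s *v (x s - c)) \<partial>lebesgue)
      = (\<integral> s. indicator A s *\<^sub>R ((k s - k t) *v (x s - c)) \<partial>lebesgue)"
    using Bochner_Integration.integral_diff[OF int_k int_kt]
      integral_indicator_matrix_diff_cell_average[OF A int_x, of "k t"]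
    by (simp add: c_def matrix_vector_mult_diff_rdistrib scaleR_right_diff_distrib)
  also have "norm \<dots> \<le> (\<integral> s. indicator A s * (\<omega> * (norm (x s) + norm c)) \<partial>lebesgue)"
  proof (rule norm_integral_indicator_matrix_vector_le)
    show "integrable lebesgue (\<lambda>s. indicator A s *\<^sub>R ((k s - k t) *v (x s - c)))"
      using Bochner_Integration.integrable_diff[OF int_k int_kt]
      by (simp add: matrix_vector_mult_diff_rdistrib scaleR_right_diff_distrib)
    show "integrable lebesgue (\<lambda>s. indicator A s * (\<omega> * (norm (x s) + norm c)))"
      using integrable_norm[OF int_x] A by (simp add: algebra_simps)
    show "norm (k s - k t) * norm (x s - c) \<le> \<omega> * (norm (x s) + norm c)" if "s \<in> A" for s
      using osc[OF that t] norm_triangle_ineq4[of "x s" c] \<omega>_nonneg by (intro mult_mono) auto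
  qed
  also have "\<dots> = \<omega> * (\<integral> s. indicator A s * norm (x s) \<partial>lebesgue) + \<omega> * (measure lebesgue A * norm c)"
    using integrable_norm[OF int_x] A by (simp add: algebra_simps)
  also have "\<dots> \<le> 2 * \<omega> * (\<integral> s. indicator A s * norm (x s) \<partial>lebesgue)"
    using measure_mult_norm_cell_average_le[of A x] \<omega>_nonneg
    by (simp add: c_def mult_left_mono)
  finally show ?thesis unfolding c_def .
qed simp

locale lebesgue_partition =
  fixes \<Omega> :: "'a::euclidean_space set" and P :: "'a set set"
  assumes finite_cells: "finite P" and disjoint_cells: "disjoint P" and Union_cells: "\<Union>P = \<Omega>"
    and sets_cell: "A \<in> P \<Longrightarrow> A \<in> sets lebesgue"
    and emeasure_domain_finite: "emeasure lebesgue \<Omega> < \<infinity>"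
begin

lemma cell_subset: "A \<in> P \<Longrightarrow> A \<subseteq> \<Omega>"
  using Union_cells by auto

lemma sets_domain: "\<Omega> \<in> sets lebesgue"
  using finite_cells sets_cell unfolding Union_cells[symmetric] by blast

lemma emeasure_cell_finite: "A \<in> P \<Longrightarrow> emeasure lebesgue A < \<infinity>"
  using emeasure_mono[OF cell_subset sets_domain] emeasure_domain_finite by (meson le_less_trans)

lemma sum_cells_indicator_scaleR:
  fixes g :: "'a set \<Rightarrow> 'b::real_vector"
  assumes "A \<in> P" "s \<in> A"
  shows "(\<Sum>B\<in>P. indicator B s *\<^sub>R g B) = g A"
proof -
  have "indicator B s *\<^sub>R g B = (if B = A then g A else 0)" if "B \<in> P" for B
  proof (cases "B = A")
    case False
    then have "B \<inter> A = {}" using assms \<open>B \<in> P\<close> disjoint_cells by (meson disjointD)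
    then show ?thesis using assms False by (auto simp: indicator_def)
  qed (use assms in auto)
  then show ?thesis using assms finite_cells by (simp cong: sum.cong)
qed

lemma sum_cells_indicator_scaleR_outside:
  fixes g :: "'a set \<Rightarrow> 'b::real_vector"
  shows "s \<notin> \<Omega> \<Longrightarrow> (\<Sum>B\<in>P. indicator B s *\<^sub>R g B) = 0"
  using Union_cells by (intro sum.neutral) (auto simp: indicator_def)

lemma indicator_domain_eq_sum_cells: "indicator \<Omega> s = (\<Sum>A\<in>P. indicator A s :: real)"
proof (cases "s \<in> \<Omega>")
  case True
  then obtain A where "A \<in> P" "s \<in> A" using Union_cells by auto
  from sum_cells_indicator_scaleR[OF this, of "\<lambda>_. 1::real"] True show ?thesis by simp
qed (use sum_cells_indicator_scaleR_outside[of s "\<lambda>_. 1::real"] in simp)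

lemma integral_domain_eq_sum_cells:
  fixes f :: "'a \<Rightarrow> 'b::{banach, second_countable_topology}"
  assumes "\<And>A. A \<in> P \<Longrightarrow> integrable lebesgue (\<lambda>s. indicator A s *\<^sub>R f s)"
  shows "(\<integral> s. indicator \<Omega> s *\<^sub>R f s \<partial>lebesgue) = (\<Sum>A\<in>P. \<integral> s. indicator A s *\<^sub>R f s \<partial>lebesgue)"
proof -
  have "(\<lambda>s. indicator \<Omega> s *\<^sub>R f s) = (\<lambda>s. \<Sum>A\<in>P. indicator A s *\<^sub>R f s)"
    by (simp add: indicator_domain_eq_sum_cells scaleR_sum_left)
  then show ?thesis using assms by (simp add: Bochner_Integration.integral_sum)
qed

lemma nn_integral_domain_eq_sum_cells:
  fixes f :: "'a \<Rightarrow> real"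
  assumes f_meas: "(\<lambda>s. indicator \<Omega> s * f s) \<in> borel_measurable lebesgue" and f_nonneg: "\<And>s. f s \<ge> 0"
  shows "(\<integral>\<^sup>+ s. ennreal (indicator \<Omega> s * f s) \<partial>lebesgue)
      = (\<Sum>A\<in>P. \<integral>\<^sup>+ s. ennreal (indicator A s * f s) \<partial>lebesgue)"
proof -
  have "(\<lambda>s. ennreal (indicator A s * f s)) \<in> borel_measurable lebesgue" if "A \<in> P" for A
    using borel_measurable_indicator_subset[OF sets_cell[OF that] cell_subset[OF that], of f] f_meas
    by simp
  moreover have "ennreal (indicator \<Omega> s * f s) = (\<Sum>A\<in>P. ennreal (indicator A s * f s))" for s
    using f_nonneg by (simp add: indicator_domain_eq_sum_cells sum_distrib_right)
  ultimately show ?thesis by (simp add: nn_integral_sum)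
qed

definition piecewise_average :: "('a \<Rightarrow> 'b::euclidean_space) \<Rightarrow> 'a \<Rightarrow> 'b" where
  "piecewise_average x s = (\<Sum>A\<in>P. indicator A s *\<^sub>R cell_average A x)"

lemma piecewise_average_cell: "A \<in> P \<Longrightarrow> s \<in> A \<Longrightarrow> piecewise_average x s = cell_average A x"
  unfolding piecewise_average_def by (rule sum_cells_indicator_scaleR)

lemma piecewise_average_outside: "s \<notin> \<Omega> \<Longrightarrow> piecewise_average x s = 0"
  unfolding piecewise_average_def by (rule sum_cells_indicator_scaleR_outside)

lemma borel_measurable_piecewise_average: "piecewise_average x \<in> borel_measurable lebesgue"
  unfolding piecewise_average_def using sets_cell
  by (intro borel_measurable_sum borel_measurable_scaleR borel_measurable_indicator) auto

lemma Lp_pow_integral_piecewise_average_le: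
  assumes p: "p > 1" and x_meas: "(\<lambda>s. indicator \<Omega> s *\<^sub>R x s) \<in> borel_measurable lebesgue"
  shows "Lp_pow_integral p \<Omega> (piecewise_average x) \<le> Lp_pow_integral p \<Omega> x"
proof -
  have "(\<lambda>s. indicator \<Omega> s * norm (piecewise_average x s) powr p) \<in> borel_measurable lebesgue"
    using borel_measurable_piecewise_average sets_domain by measurable
  then have "Lp_pow_integral p \<Omega> (piecewise_average x)
      = (\<Sum>A\<in>P. \<integral>\<^sup>+ s. ennreal (indicator A s * norm (piecewise_average x s) powr p) \<partial>lebesgue)"
    unfolding Lp_pow_integral_def by (rule nn_integral_domain_eq_sum_cells) simp
  also have "\<dots> = (\<Sum>A\<in>P. ennreal (norm (cell_average A x) powr p) * emeasure lebesgue A)"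
  proof (rule sum.cong[OF refl])
    fix A assume A: "A \<in> P"
    have "(\<lambda>s. ennreal (indicator A s * norm (piecewise_average x s) powr p))
        = (\<lambda>s. ennreal (norm (cell_average A x) powr p) * indicator A s)"
      by (intro ext) (simp add: indicator_def piecewise_average_cell[OF A])
    then show "(\<integral>\<^sup>+ s. ennreal (indicator A s * norm (piecewise_average x s) powr p) \<partial>lebesgue)
        = ennreal (norm (cell_average A x) powr p) * emeasure lebesgue A"
      using sets_cell[OF A] by (simp add: nn_integral_cmult_indicator)
  qed
  also have "\<dots> \<le> (\<Sum>A\<in>P. \<integral>\<^sup>+ s. ennreal (indicator A s * norm (x s) powr p) \<partial>lebesgue)"
    using sets_cell emeasure_cell_finite p
      borel_measurable_indicator_subset[OF sets_cell cell_subset x_meas]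
    by (intro sum_mono cell_average_powr_le)
  also have "\<dots> = Lp_pow_integral p \<Omega> x"
  proof -
    have "(\<lambda>s. norm (indicator \<Omega> s *\<^sub>R x s) powr p) \<in> borel_measurable lebesgue"
      using x_meas by measurable
    moreover have "norm (indicator \<Omega> s *\<^sub>R x s) powr p = indicator \<Omega> s * norm (x s) powr p" for s
      using p by (auto simp: indicator_def)
    ultimately show ?thesis
      unfolding Lp_pow_integral_def by (intro nn_integral_domain_eq_sum_cells[symmetric]) auto
  qed
  finally show ?thesis .
qed

lemma piecewise_average_in_Lp_ball_bdd_pc:
  assumes p: "p > 1" and x: "x \<in> Lp_ball_bdd p \<Omega> r \<gamma>"
  shows "piecewise_average x \<in> Lp_ball_bdd_pc p \<Omega> r \<gamma> P"
proof -
  have x_meas: "(\<lambda>s. indicator \<Omega> s *\<^sub>R x s) \<in> borel_measurable lebesgue"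
    and x_le: "\<And>s. s \<in> \<Omega> \<Longrightarrow> norm (x s) \<le> \<gamma>"
    and x_fin: "Lp_pow_integral p \<Omega> x < \<infinity>" and x_norm: "Lp_norm p \<Omega> x \<le> r"
    using x by (auto simp: Lp_ball_bdd_def Lp_ball_def in_Lp_def set_borel_measurable_def)
  define y where "y = piecewise_average x"
  have y_pow: "Lp_pow_integral p \<Omega> y \<le> Lp_pow_integral p \<Omega> x"
    unfolding y_def using p x_meas by (rule Lp_pow_integral_piecewise_average_le)
  then have y_fin: "Lp_pow_integral p \<Omega> y < \<infinity>"
    using x_fin by (meson le_less_trans)
  have "Lp_norm p \<Omega> y \<le> Lp_norm p \<Omega> x"
    unfolding Lp_norm_def using y_pow x_fin p by (intro powr_mono2 enn2real_mono) auto
  then have y_norm: "Lp_norm p \<Omega> y \<le> r" using x_norm by linarith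
  have y_le: "norm (y s) \<le> \<gamma>" if "s \<in> \<Omega>" for s
  proof -
    obtain A where A: "A \<in> P" "s \<in> A" using \<open>s \<in> \<Omega>\<close> Union_cells by auto
    have "\<gamma> \<ge> 0" using x_le[OF that] by (meson norm_ge_zero order_trans)
    then show ?thesis
      unfolding y_def piecewise_average_cell[OF A]
      using sets_cell[OF A(1)] emeasure_cell_finite[OF A(1)] x_le cell_subset[OF A(1)]
      by (intro norm_cell_average_le) auto
  qed
  have "(\<lambda>s. indicator \<Omega> s *\<^sub>R y s) = y"
    using piecewise_average_outside unfolding y_def by (intro ext) (auto simp: indicator_def)
  then have y_meas: "(\<lambda>s. indicator \<Omega> s *\<^sub>R y s) \<in> borel_measurable lebesgue"
    using borel_measurable_piecewise_average by (simp add: y_def)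
  have "\<forall>A\<in>P. \<exists>c. \<forall>s\<in>A. y s = c"
    using piecewise_average_cell unfolding y_def by blast
  then show ?thesis
    using y_meas y_fin y_norm y_le unfolding y_def[symmetric]
    by (auto simp: Lp_ball_bdd_pc_def Lp_ball_bdd_def Lp_ball_def in_Lp_def set_borel_measurable_def)
qed

lemma set_integral_diff_piecewise_average_eq_sum:
  fixes k :: "'a \<Rightarrow> real^'n^'m" and x :: "'a \<Rightarrow> real^'n"
  assumes int_kx: "\<And>A. A \<in> P \<Longrightarrow> integrable lebesgue (\<lambda>s. indicator A s *\<^sub>R (k s *v x s))"
    and int_kc: "\<And>A. A \<in> P \<Longrightarrow> integrable lebesgue (\<lambda>s. indicator A s *\<^sub>R (k s *v cell_average A x))"
  shows "(LINT s:\<Omega>|lebesgue. k s *v x s) - (LINT s:\<Omega>|lebesgue. k s *v piecewise_average x s)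
      = (\<Sum>A\<in>P. \<integral> s. indicator A s *\<^sub>R (k s *v (x s - cell_average A x)) \<partial>lebesgue)"
proof -
  have kp_cell: "(\<lambda>s. indicator A s *\<^sub>R (k s *v piecewise_average x s))
      = (\<lambda>s. indicator A s *\<^sub>R (k s *v cell_average A x))" if "A \<in> P" for A
    by (intro ext) (auto simp: indicator_def piecewise_average_cell[OF that])
  have int_kp: "integrable lebesgue (\<lambda>s. indicator A s *\<^sub>R (k s *v piecewise_average x s))"
    if "A \<in> P" for A
    using int_kc[OF that] kp_cell[OF that] by simp
  have "(LINT s:\<Omega>|lebesgue. k s *v x s) - (LINT s:\<Omega>|lebesgue. k s *v piecewise_average x s)
      = (\<Sum>A\<in>P. (\<integral> s. indicator A s *\<^sub>R (k s *v x s) \<partial>lebesgue)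
          - (\<integral> s. indicator A s *\<^sub>R (k s *v piecewise_average x s) \<partial>lebesgue))"
    using integral_domain_eq_sum_cells[OF int_kx] integral_domain_eq_sum_cells[OF int_kp]
    by (simp add: set_lebesgue_integral_def sum_subtractf)
  also have "\<dots> = (\<Sum>A\<in>P. \<integral> s. indicator A s *\<^sub>R (k s *v (x s - cell_average A x)) \<partial>lebesgue)"
  proof (rule sum.cong[OF refl])
    fix A assume A: "A \<in> P"
    show "(\<integral> s. indicator A s *\<^sub>R (k s *v x s) \<partial>lebesgue)
        - (\<integral> s. indicator A s *\<^sub>R (k s *v piecewise_average x s) \<partial>lebesgue)
        = (\<integral> s. indicator A s *\<^sub>R (k s *v (x s - cell_average A x)) \<partial>lebesgue)"
      unfolding kp_cell[OF A] Bochner_Integration.integral_diff[OF int_kx[OF A] int_kc[OF A], symmetric]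
      by (simp add: matrix_vector_mult_diff_distrib scaleR_right_diff_distrib)
  qed
  finally show ?thesis .
qed

lemma norm_set_integral_diff_piecewise_average_le:
  fixes k :: "'a \<Rightarrow> real^'n^'m" and x :: "'a \<Rightarrow> real^'n"
  assumes k: "(\<lambda>s. indicator \<Omega> s *\<^sub>R k s) \<in> borel_measurable lebesgue" "\<And>s. s \<in> \<Omega> \<Longrightarrow> norm (k s) \<le> B"
    and x: "(\<lambda>s. indicator \<Omega> s *\<^sub>R x s) \<in> borel_measurable lebesgue" "\<And>s. s \<in> \<Omega> \<Longrightarrow> norm (x s) \<le> \<gamma>"
    and osc: "\<And>A s t. A \<in> P \<Longrightarrow> s \<in> A \<Longrightarrow> t \<in> A \<Longrightarrow> norm (k s - k t) \<le> \<omega>"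
  shows "norm ((LINT s:\<Omega>|lebesgue. k s *v x s) - (LINT s:\<Omega>|lebesgue. k s *v piecewise_average x s))
      \<le> 2 * \<omega> * (\<integral> s. indicator \<Omega> s * norm (x s) \<partial>lebesgue)"
proof -
  have cell: "A \<in> sets lebesgue" "emeasure lebesgue A < \<infinity>"
    "(\<lambda>s. indicator A s *\<^sub>R k s) \<in> borel_measurable lebesgue" "\<And>s. s \<in> A \<Longrightarrow> norm (k s) \<le> B"
    "(\<lambda>s. indicator A s *\<^sub>R x s) \<in> borel_measurable lebesgue" "\<And>s. s \<in> A \<Longrightarrow> norm (x s) \<le> \<gamma>"
    if A: "A \<in> P" for A
    using sets_cell[OF A] emeasure_cell_finite[OF A] cell_subset[OF A] k x
      borel_measurable_indicator_subset[OF sets_cell[OF A] cell_subset[OF A]]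
    by auto
  have "norm ((LINT s:\<Omega>|lebesgue. k s *v x s) - (LINT s:\<Omega>|lebesgue. k s *v piecewise_average x s))
      \<le> (\<Sum>A\<in>P. norm (\<integral> s. indicator A s *\<^sub>R (k s *v (x s - cell_average A x)) \<partial>lebesgue))"
    using cell by (subst set_integral_diff_piecewise_average_eq_sum)
      (auto intro!: integrable_indicator_matrix_vector_mult norm_sum)
  also have "\<dots> \<le> (\<Sum>A\<in>P. 2 * \<omega> * (\<integral> s. indicator A s * norm (x s) \<partial>lebesgue))"
    using cell osc by (intro sum_mono) (rule norm_integral_cell_oscillation_le)
  also have "\<dots> = 2 * \<omega> * (\<integral> s. indicator \<Omega> s * norm (x s) \<partial>lebesgue)"
  proof -
    have "integrable lebesgue (\<lambda>s. indicator A s *\<^sub>R norm (x s))" if "A \<in> P" for A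
      using integrable_norm[OF integrable_indicator_bounded[OF cell(1,2,5,6)[OF that]]]
      by simp
    then show ?thesis
      using integral_domain_eq_sum_cells[of "\<lambda>s. norm (x s)"] by (simp add: sum_distrib_left)
  qed
  finally show ?thesis .
qed

end

lemma lebesgue_partition_if_Delta_partition:
  assumes "is_Delta_partition \<Omega> \<Delta> P" "emeasure lebesgue \<Omega> < \<infinity>"
  shows "lebesgue_partition \<Omega> P"
  using assms by unfold_locales (auto simp: is_Delta_partition_def)

lemma Delta_partition_cell_dist_le:
  assumes "is_Delta_partition \<Omega> \<Delta> P" "bounded \<Omega>" "A \<in> P" "s \<in> A" "t \<in> A"
  shows "norm (s - t) \<le> \<Delta>"
proof -
  have "A \<subseteq> \<Omega>" "diameter A \<le> \<Delta>"
    using assms(1,3) by (auto simp: is_Delta_partition_def)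
  moreover have "dist s t \<le> diameter A"
    using diameter_bounded_bound[OF bounded_subset[OF assms(2) \<open>A \<subseteq> \<Omega>\<close>] assms(4,5)] .
  ultimately show ?thesis by (simp add: dist_norm)
qed

lemma compact_continuous_kernel_bounded:
  fixes K :: "'a::topological_space \<Rightarrow> 'a \<Rightarrow> 'b::real_normed_vector"
  assumes "compact \<Omega>" "continuous_on (\<Omega> \<times> \<Omega>) (\<lambda>(\<xi>, s). K \<xi> s)"
  obtains B where "\<And>\<xi> s. \<xi> \<in> \<Omega> \<Longrightarrow> s \<in> \<Omega> \<Longrightarrow> norm (K \<xi> s) \<le> B"
proof -
  have "compact ((\<lambda>(\<xi>, s). K \<xi> s) ` (\<Omega> \<times> \<Omega>))"
    using assms by (intro compact_continuous_image compact_Times)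
  then obtain B where "\<forall>z\<in>(\<lambda>(\<xi>, s). K \<xi> s) ` (\<Omega> \<times> \<Omega>). norm z \<le> B"
    using compact_imp_bounded bounded_iff by metis
  then show ?thesis using that by fastforce
qed

lemma borel_measurable_kernel_row:
  fixes K :: "'a::euclidean_space \<Rightarrow> 'a \<Rightarrow> 'b::euclidean_space"
  assumes "compact \<Omega>" "continuous_on (\<Omega> \<times> \<Omega>) (\<lambda>(\<xi>, s). K \<xi> s)" "\<xi> \<in> \<Omega>"
  shows "(\<lambda>s. indicator \<Omega> s *\<^sub>R K \<xi> s) \<in> borel_measurable lebesgue"
proof -
  have "continuous_on \<Omega> (\<lambda>s. (\<lambda>(\<xi>, s). K \<xi> s) (\<xi>, s))"
    by (rule continuous_on_compose2[OF assms(2) continuous_on_Pair[OF continuous_on_const continuous_on_id]])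
      (use assms(3) in auto)
  then have "(\<lambda>s. indicator \<Omega> s *\<^sub>R K \<xi> s) \<in> borel_measurable borel"
    using compact_imp_closed[OF assms(1)]
    by (intro borel_measurable_continuous_on_indicator) (simp_all add: borel_closed)
  then show ?thesis by (intro measurable_completion) simp
qed

lemma norm_kernel_diff_le_mod_cont:
  fixes K :: "real^'k \<Rightarrow> real^'k \<Rightarrow> real^'n^'m"
  assumes "compact \<Omega>" "continuous_on (\<Omega> \<times> \<Omega>) (\<lambda>(\<xi>, s). K \<xi> s)"
    and "\<xi> \<in> \<Omega>" "s\<^sub>1 \<in> \<Omega>" "s\<^sub>2 \<in> \<Omega>" "norm (s\<^sub>2 - s\<^sub>1) \<le> \<Delta>"
  shows "norm (K \<xi> s\<^sub>2 - K \<xi> s\<^sub>1) \<le> mod_cont K \<Omega> \<Delta>"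
  unfolding mod_cont_def
proof (rule cSup_upper)
  obtain B where B: "\<And>\<xi> s. \<xi> \<in> \<Omega> \<Longrightarrow> s \<in> \<Omega> \<Longrightarrow> norm (K \<xi> s) \<le> B"
    using compact_continuous_kernel_bounded[OF assms(1,2)] by blast
  show "bdd_above {norm (K \<xi> s\<^sub>2 - K \<xi> s\<^sub>1) |\<xi> s\<^sub>1 s\<^sub>2.
      \<xi> \<in> \<Omega> \<and> s\<^sub>1 \<in> \<Omega> \<and> s\<^sub>2 \<in> \<Omega> \<and> norm (s\<^sub>2 - s\<^sub>1) \<le> \<Delta>}"
  proof (rule bdd_aboveI[where M = "2 * B"], clarify)
    fix \<xi> s\<^sub>1 s\<^sub>2 assume "\<xi> \<in> \<Omega>" "s\<^sub>1 \<in> \<Omega>" "s\<^sub>2 \<in> \<Omega>"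
    then show "norm (K \<xi> s\<^sub>2 - K \<xi> s\<^sub>1) \<le> 2 * B"
      using B[of \<xi> s\<^sub>1] B[of \<xi> s\<^sub>2] norm_triangle_ineq4[of "K \<xi> s\<^sub>2" "K \<xi> s\<^sub>1"] by linarith
  qed
qed (use assms in blast)

lemma integral_indicator_norm_le_Lp_norm:
  assumes "\<Omega> \<in> sets lebesgue" "emeasure lebesgue \<Omega> < \<infinity>" "p > 1" "1/p + 1/q = 1"
    and "in_Lp p \<Omega> x"
  shows "(\<integral> s. indicator \<Omega> s * norm (x s) \<partial>lebesgue) \<le> measure lebesgue \<Omega> powr (1/q) * Lp_norm p \<Omega> x"
proof -
  have "(\<lambda>s. indicator \<Omega> s *\<^sub>R x s) \<in> borel_measurable lebesgue"
    using assms(5) by (simp add: in_Lp_def set_borel_measurable_def)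
  then have "(\<lambda>s. norm (indicator \<Omega> s *\<^sub>R x s)) \<in> borel_measurable lebesgue"
    by measurable
  then show ?thesis
    using assms unfolding Lp_norm_def in_Lp_def Lp_pow_integral_def
    by (intro integral_indicator_Holder) auto
qed

lemma norm_F_op_diff_piecewise_average_le:
  fixes \<Omega> :: "(real^'k) set" and K :: "real^'k \<Rightarrow> real^'k \<Rightarrow> real^'n^'m"
    and x :: "real^'k \<Rightarrow> real^'n"
  assumes \<Omega>: "compact \<Omega>" and K: "continuous_on (\<Omega> \<times> \<Omega>) (\<lambda>(\<xi>, s). K \<xi> s)"
    and P: "is_Delta_partition \<Omega> \<Delta> P"
    and x: "(\<lambda>s. indicator \<Omega> s *\<^sub>R x s) \<in> borel_measurable lebesgue" "\<And>s. s \<in> \<Omega> \<Longrightarrow> norm (x s) \<le> \<gamma>"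
    and \<xi>: "\<xi> \<in> \<Omega>"
  shows "norm (F_op K \<Omega> x \<xi> - F_op K \<Omega> (lebesgue_partition.piecewise_average P x) \<xi>)
      \<le> 2 * mod_cont K \<Omega> \<Delta> * (\<integral> s. indicator \<Omega> s * norm (x s) \<partial>lebesgue)"
proof -
  interpret lebesgue_partition \<Omega> P
    using P lmeasurable_compact[OF \<Omega>]
    by (intro lebesgue_partition_if_Delta_partition) (auto simp: fmeasurable_def)
  obtain B where B: "\<And>\<xi> s. \<xi> \<in> \<Omega> \<Longrightarrow> s \<in> \<Omega> \<Longrightarrow> norm (K \<xi> s) \<le> B"
    using compact_continuous_kernel_bounded[OF \<Omega> K] by blast
  have osc: "norm (K \<xi> s - K \<xi> t) \<le> mod_cont K \<Omega> \<Delta>" if "A \<in> P" "s \<in> A" "t \<in> A" for A s t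
    using \<Omega> K \<xi> cell_subset[OF \<open>A \<in> P\<close>] \<open>t \<in> A\<close> \<open>s \<in> A\<close>
      Delta_partition_cell_dist_le[OF P compact_imp_bounded[OF \<Omega>] that]
    by (intro norm_kernel_diff_le_mod_cont) auto
  show ?thesis
    unfolding F_op_def
    using borel_measurable_kernel_row[OF \<Omega> K \<xi>] B[OF \<xi>] x osc
    by (rule norm_set_integral_diff_piecewise_average_le)
qed

lemma exists_piecewise_constant_approximation:
  fixes \<Omega> :: "(real^'k) set" and K :: "real^'k \<Rightarrow> real^'k \<Rightarrow> real^'n^'m"
    and x :: "real^'k \<Rightarrow> real^'n"
  assumes \<Omega>: "compact \<Omega>" and pq: "p > 1" "1/p + 1/q = 1"
    and K: "continuous_on (\<Omega> \<times> \<Omega>) (\<lambda>(\<xi>, s). K \<xi> s)"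
    and P: "is_Delta_partition \<Omega> \<Delta> P"
    and x: "x \<in> Lp_ball_bdd p \<Omega> r \<gamma>"
  shows "\<exists>y \<in> Lp_ball_bdd_pc p \<Omega> r \<gamma> P. Lp_norm q \<Omega> (\<lambda>\<xi>. F_op K \<Omega> x \<xi> - F_op K \<Omega> y \<xi>)
           \<le> 2 * r * measure lebesgue \<Omega> powr (2/q) * mod_cont K \<Omega> \<Delta>"
proof -
  have q_pos: "q > 0" using pq
    by (smt (verit) divide_less_eq_1_pos divide_pos_pos zero_less_divide_1_iff)
  have \<Omega>_sets: "\<Omega> \<in> sets lebesgue" and \<Omega>_finite: "emeasure lebesgue \<Omega> < \<infinity>"
    using lmeasurable_compact[OF \<Omega>] by (auto simp: fmeasurable_def)
  interpret lebesgue_partition \<Omega> P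
    using P \<Omega>_finite by (rule lebesgue_partition_if_Delta_partition)
  define y where "y = piecewise_average x"
  define \<omega> where "\<omega> = mod_cont K \<Omega> \<Delta>"
  define \<mu> where "\<mu> = measure lebesgue \<Omega>"
  have y: "y \<in> Lp_ball_bdd_pc p \<Omega> r \<gamma> P"
    unfolding y_def using pq(1) x by (rule piecewise_average_in_Lp_ball_bdd_pc)
  have x_meas: "(\<lambda>s. indicator \<Omega> s *\<^sub>R x s) \<in> borel_measurable lebesgue"
    and x_le: "\<And>s. s \<in> \<Omega> \<Longrightarrow> norm (x s) \<le> \<gamma>"
    and x_Lp: "in_Lp p \<Omega> x" and x_norm: "Lp_norm p \<Omega> x \<le> r"
    using x by (auto simp: Lp_ball_bdd_def Lp_ball_def in_Lp_def set_borel_measurable_def)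
  have r_nonneg: "r \<ge> 0"
    using x_norm order_trans[of 0 "Lp_norm p \<Omega> x" r] by (simp add: Lp_norm_def)
  have x_L1: "(\<integral> s. indicator \<Omega> s * norm (x s) \<partial>lebesgue) \<le> \<mu> powr (1/q) * r"
    using integral_indicator_norm_le_Lp_norm[OF \<Omega>_sets \<Omega>_finite pq x_Lp] x_norm
    unfolding \<mu>_def by (meson mult_left_mono order_trans powr_ge_zero)
  show ?thesis
  proof (cases "\<Omega> = {}")
    case True
    then show ?thesis using y by (auto simp: Lp_norm_def Lp_pow_integral_def)
  next
    case False
    then obtain \<xi>\<^sub>0 A where "\<xi>\<^sub>0 \<in> \<Omega>" "A \<in> P" "\<xi>\<^sub>0 \<in> A" using Union_cells by auto
    then have \<omega>_nonneg: "\<omega> \<ge> 0"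
      using Delta_partition_cell_dist_le[OF P compact_imp_bounded[OF \<Omega>], of A \<xi>\<^sub>0 \<xi>\<^sub>0]
        norm_kernel_diff_le_mod_cont[OF \<Omega> K, of \<xi>\<^sub>0 \<xi>\<^sub>0 \<xi>\<^sub>0 \<Delta>]
      by (simp add: \<omega>_def)
    have "norm (F_op K \<Omega> x \<xi> - F_op K \<Omega> y \<xi>) \<le> 2 * \<omega> * (\<mu> powr (1/q) * r)" if "\<xi> \<in> \<Omega>" for \<xi>
      using norm_F_op_diff_piecewise_average_le[OF \<Omega> K P x_meas x_le that] x_L1 \<omega>_nonneg
      unfolding y_def \<omega>_def by (meson mult_left_mono order_trans zero_le_mult_iff zero_le_numeral)
    then have "Lp_norm q \<Omega> (\<lambda>\<xi>. F_op K \<Omega> x \<xi> - F_op K \<Omega> y \<xi>) \<le> 2 * \<omega> * (\<mu> powr (1/q) * r) * \<mu> powr (1/q)"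
      using \<Omega>_sets \<Omega>_finite q_pos \<omega>_nonneg r_nonneg unfolding \<mu>_def by (intro Lp_norm_le_const) auto
    also have "\<dots> = 2 * r * \<mu> powr (2/q) * \<omega>"
      by (simp add: powr_add[symmetric] algebra_simps)
    finally show ?thesis using y unfolding \<omega>_def \<mu>_def by blast
  qed
qed

lemma zero_in_Lp_ball_bdd_pc: "r \<ge> 0 \<Longrightarrow> \<gamma> \<ge> 0 \<Longrightarrow> (\<lambda>_. 0) \<in> Lp_ball_bdd_pc p \<Omega> r \<gamma> P"
  by (simp add: Lp_ball_bdd_pc_def Lp_ball_bdd_def Lp_ball_def in_Lp_def Lp_norm_def
      Lp_pow_integral_def set_borel_measurable_def)

lemma hausdist_Lq_le_if_approximable:
  assumes sub: "B \<subseteq> A" and ne: "B \<noteq> {}"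
    and approx: "\<And>f. f \<in> A \<Longrightarrow> \<exists>g\<in>B. Lp_norm q \<Omega> (\<lambda>s. f s - g s) \<le> R"
  shows "hausdist_Lq q \<Omega> A B \<le> ereal R"
proof -
  have Lp_norm_nonneg: "Lp_norm q \<Omega> h \<ge> 0" for h :: "'a \<Rightarrow> 'b"
    by (simp add: Lp_norm_def)
  have R_nonneg: "R \<ge> 0"
    using ne sub approx Lp_norm_nonneg order_trans by blast
  have "(SUP f\<in>A. INF g\<in>B. ereal (Lp_norm q \<Omega> (\<lambda>s. f s - g s))) \<le> ereal R"
  proof (rule SUP_least)
    fix f assume "f \<in> A"
    then obtain g where "g \<in> B" "Lp_norm q \<Omega> (\<lambda>s. f s - g s) \<le> R" using approx by blast
    then show "(INF g\<in>B. ereal (Lp_norm q \<Omega> (\<lambda>s. f s - g s))) \<le> ereal R"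
      by (intro INF_lower2[of g]) auto
  qed
  moreover have "(SUP g\<in>B. INF f\<in>A. ereal (Lp_norm q \<Omega> (\<lambda>s. f s - g s))) \<le> ereal R"
  proof (rule SUP_least)
    fix g assume "g \<in> B"
    then show "(INF f\<in>A. ereal (Lp_norm q \<Omega> (\<lambda>s. f s - g s))) \<le> ereal R"
      using sub R_nonneg by (intro INF_lower2[of g]) (auto simp: Lp_norm_def Lp_pow_integral_def)
  qed
  ultimately show ?thesis unfolding hausdist_Lq_def by simp
qed

theorem mainTheorem5:
  fixes \<Omega> :: "(real^'k) set"
    and K :: "real \<Rightarrow> real^'k \<Rightarrow> real^'k \<Rightarrow> real^'n^'m"
    and p q r lam \<gamma> \<Delta> :: real
    and P :: "(real^'k) set set"
  assumes "compact \<Omega>"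
    and "p > 1" and "1/p + 1/q = 1" and "r > 0"
    and "lam > 0" and "\<gamma> > 0" and "\<Delta> > 0"
    and "continuous_on (\<Omega> \<times> \<Omega>) (\<lambda>(\<xi>, s). K lam \<xi> s)"
    and "is_Delta_partition \<Omega> \<Delta> P"
  shows "hausdist_Lq q \<Omega>
           (F_op (K lam) \<Omega> ` (Lp_ball_bdd p \<Omega> r \<gamma> :: (real^'k \<Rightarrow> real^'n) set))
           (F_op (K lam) \<Omega> ` (Lp_ball_bdd_pc p \<Omega> r \<gamma> P :: (real^'k \<Rightarrow> real^'n) set))
         \<le> ereal (2 * r * (measure lebesgue \<Omega>) powr (2 / q) * mod_cont (K lam) \<Omega> \<Delta>)"
proof (rule hausdist_Lq_le_if_approximable)
  show "F_op (K lam) \<Omega> ` Lp_ball_bdd_pc p \<Omega> r \<gamma> P \<subseteq> F_op (K lam) \<Omega> ` Lp_ball_bdd p \<Omega> r \<gamma>"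
    by (intro image_mono) (auto simp: Lp_ball_bdd_pc_def)
  show "F_op (K lam) \<Omega> ` Lp_ball_bdd_pc p \<Omega> r \<gamma> P \<noteq> {}"
    using zero_in_Lp_ball_bdd_pc[of r \<gamma>] assms(4,6) by fastforce
next
  fix f assume "f \<in> F_op (K lam) \<Omega> ` Lp_ball_bdd p \<Omega> r \<gamma>"
  then obtain x where "x \<in> Lp_ball_bdd p \<Omega> r \<gamma>" "f = F_op (K lam) \<Omega> x" by blast
  with exists_piecewise_constant_approximation[OF assms(1-3,8,9)]
  show "\<exists>g\<in>F_op (K lam) \<Omega> ` Lp_ball_bdd_pc p \<Omega> r \<gamma> P.
      Lp_norm q \<Omega> (\<lambda>s. f s - g s) \<le> 2 * r * measure lebesgue \<Omega> powr (2 / q) * mod_cont (K lam) \<Omega> \<Delta>"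
    by blast
qed

end
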